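(* Let $\Phi$ be a countable measure-determining class of measurable functions $\phi:\mathbb{R}\to\mathbb{R}$ with $\|\phi\|_\infty\le1$, and let $$\Phi_1=\Big\{\tfrac{f+cg}{\|f+cg\|_\infty}:\ f,g\in\Phi,\ c\in\mathbb{Q},\ f+cg\not\equiv0\Big\}.$$ Let $\alpha,\mu,\nu$ be Borel probability measures on $\mathbb{R}$ with $\mu\neq\alpha$, $\nu\neq\alpha$ and $\mu\neq\nu$. For a bounded measurable $\psi$ write $\psi_0=\psi-\int\psi\,d\alpha$. Then there exists $\psi\in\Phi_1$ with $$\int\psi_0\,d\mu\neq0,\qquad \int\psi_0\,d\nu\neq0,\qquad \int\psi_0\,d\mu\neq\int\psi_0\,d\nu.$$
   Context: A class $\Phi$ of measurable functions on $\mathbb{R}$ is measure determining if, for Borel probability measures $\mu,\nu$, $\int\phi\,d\mu=\int\phi\,d\nu$ for all $\phi\in\Phi$ implies $\mu=\nu$. *)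

theory Defs
  imports "HOL-Probability.Probability"
begin

definition borel_prob :: "real measure \<Rightarrow> bool" where
  "borel_prob M \<longleftrightarrow> prob_space M \<and> sets M = sets borel"

definition measure_determining :: "(real \<Rightarrow> real) set \<Rightarrow> bool" where
  "measure_determining \<Phi> \<longleftrightarrow>
     (\<forall>\<mu> \<nu>. borel_prob \<mu> \<longrightarrow> borel_prob \<nu> \<longrightarrow>
        (\<forall>\<phi>\<in>\<Phi>. integral\<^sup>L \<mu> \<phi> = integral\<^sup>L \<nu> \<phi>) \<longrightarrow> \<mu> = \<nu>)"

definition supnorm :: "(real \<Rightarrow> real) \<Rightarrow> real" where
  "supnorm h = (SUP x. \<bar>h x\<bar>)"

definition Phi1 :: "(real \<Rightarrow> real) set \<Rightarrow> (real \<Rightarrow> real) set" where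
  "Phi1 \<Phi> = {(\<lambda>x. (f x + c * g x) / supnorm (\<lambda>y. f y + c * g y)) | f g c.
      f \<in> \<Phi> \<and> g \<in> \<Phi> \<and> c \<in> \<rat> \<and> (\<lambda>y. f y + c * g y) \<noteq> (\<lambda>y. 0)}"

end

theory Submission
  imports Defs
begin

text \<open>
  Measure determination yields \<open>f\<^sub>1, f\<^sub>2, f\<^sub>3 \<in> \<Phi>\<close> on which the linear functionals
  \<open>A h = \<integral>h d\<mu> - \<integral>h d\<alpha>\<close>, \<open>B h = \<integral>h d\<nu> - \<integral>h d\<alpha>\<close> and \<open>A - B\<close> respectively do not vanish.
  Since \<open>A - B\<close> vanishes wherever both \<open>A\<close> and \<open>B\<close> do, two of these functions \<open>f, g\<close>
  already suffice to make each functional nonzero at \<open>f\<close> or at \<open>g\<close>. Each functional then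
  vanishes at \<open>f + n g\<close> for at most one \<open>n\<close>, so some natural \<open>n\<close> avoids all three, and
  normalising \<open>f + n g\<close> by its sup norm only rescales the three values.
\<close>

lemma borel_prob_integrable_bounded:
  assumes "borel_prob M" "h \<in> borel_measurable borel" "\<And>x. \<bar>h x\<bar> \<le> (B::real)"
  shows "integrable M h"
proof -
  interpret prob_space M using assms(1) by (simp add: borel_prob_def)
  have "h \<in> borel_measurable M"
    using assms(1,2) measurable_cong_sets[of M borel] by (auto simp: borel_prob_def)
  then show ?thesis
    by (intro integrable_const_bound[where B=B]) (use assms(3) in auto)
qed

lemma borel_prob_centered_integral_divide:
  fixes h :: "real \<Rightarrow> real"
  assumes "borel_prob M" "integrable M h"
  shows "(\<integral>x. (h x / s - integral\<^sup>L N (\<lambda>x. h x / s)) \<partial>M) =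
    (integral\<^sup>L M h - integral\<^sup>L N h) / s"
proof -
  interpret prob_space M using assms(1) by (simp add: borel_prob_def)
  show ?thesis
    using assms(2) by (simp add: prob_space lebesgue_integral_const diff_divide_distrib)
qed

lemma borel_prob_integral_diff_lincomb:
  fixes f g :: "real \<Rightarrow> real"
  assumes "borel_prob M" "borel_prob N"
    and "f \<in> borel_measurable borel" "\<And>x. \<bar>f x\<bar> \<le> K"
    and "g \<in> borel_measurable borel" "\<And>x. \<bar>g x\<bar> \<le> K"
  shows "integral\<^sup>L M (\<lambda>x. f x + c * g x) - integral\<^sup>L N (\<lambda>x. f x + c * g x) =
    (integral\<^sup>L M f - integral\<^sup>L N f) + c * (integral\<^sup>L M g - integral\<^sup>L N g)"
proof -
  have "integrable M f" "integrable M g" "integrable N f" "integrable N g"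
    by (rule borel_prob_integrable_bounded[OF assms(1,3,4)] borel_prob_integrable_bounded[OF assms(1,5,6)]
        borel_prob_integrable_bounded[OF assms(2,3,4)] borel_prob_integrable_bounded[OF assms(2,5,6)])+
  then show ?thesis by (simp add: algebra_simps)
qed

lemma supnorm_pos:
  assumes "\<And>x. \<bar>h x\<bar> \<le> B" "h \<noteq> (\<lambda>x. 0)"
  shows "supnorm h > 0"
proof -
  obtain x0 where "h x0 \<noteq> 0" using assms(2) by auto
  moreover have "bdd_above (range (\<lambda>x. \<bar>h x\<bar>))" using assms(1) by (intro bdd_aboveI2) auto
  then have "\<bar>h x0\<bar> \<le> supnorm h" unfolding supnorm_def by (rule cSUP_upper[OF UNIV_I])
  ultimately show ?thesis by linarith
qed

lemma supnorm_lincomb_pos: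
  fixes f g :: "real \<Rightarrow> real"
  assumes "\<And>x. \<bar>f x\<bar> \<le> 1" "\<And>x. \<bar>g x\<bar> \<le> 1" "(\<lambda>x. f x + c * g x) \<noteq> (\<lambda>x. 0)"
  shows "supnorm (\<lambda>x. f x + c * g x) > 0"
proof (rule supnorm_pos[OF _ assms(3)])
  fix x
  have "\<bar>f x + c * g x\<bar> \<le> \<bar>f x\<bar> + \<bar>c\<bar> * \<bar>g x\<bar>"
    using abs_triangle_ineq[of "f x" "c * g x"] by (simp add: abs_mult)
  also have "\<dots> \<le> 1 + \<bar>c\<bar>"
    using assms(1,2)[of x] by (intro add_mono mult_left_le) simp_all
  finally show "\<bar>f x + c * g x\<bar> \<le> 1 + \<bar>c\<bar>" .
qed

lemma finite_nat_roots_affine: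
  fixes x y :: real
  assumes "x \<noteq> 0 \<or> y \<noteq> 0"
  shows "finite {n::nat. x + real n * y = 0}"
proof (cases "y = 0")
  case True
  then show ?thesis using assms by simp
next
  case False
  have "{n::nat. x + real n * y = 0} \<subseteq> {nat \<lceil>- x / y\<rceil>}"
  proof
    fix n assume "n \<in> {n::nat. x + real n * y = 0}"
    then have "real n = - x / y" using False by (simp add: field_simps)
    then show "n \<in> {nat \<lceil>- x / y\<rceil>}" by (metis ceiling_of_nat nat_int singletonI)
  qed
  then show ?thesis using finite_subset by blast
qed

lemma ex_nat_avoiding_affine_roots:
  fixes P :: "(real \<times> real) set"
  assumes "finite P" "\<forall>(x, y) \<in> P. x \<noteq> 0 \<or> y \<noteq> 0"
  shows "\<exists>n::nat. \<forall>(x, y) \<in> P. x + real n * y \<noteq> 0"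
proof -
  have "finite (\<Union>(x, y) \<in> P. {n::nat. x + real n * y = 0})"
    using assms finite_nat_roots_affine by auto
  then obtain n where "n \<notin> (\<Union>(x, y) \<in> P. {n::nat. x + real n * y = 0})"
    using ex_new_if_finite[OF infinite_UNIV_nat] by (metis UNIV_I)
  then show ?thesis by blast
qed

lemma ex_combination_separating_functionals:
  fixes A B :: "'f \<Rightarrow> real"
  assumes "f \<in> \<Phi>" "A f \<noteq> 0" "f2 \<in> \<Phi>" "B f2 \<noteq> 0" "f3 \<in> \<Phi>" "A f3 \<noteq> B f3"
  shows "\<exists>g\<in>\<Phi>. \<exists>n::nat.
    A f + n * A g \<noteq> 0 \<and> B f + n * B g \<noteq> 0 \<and> A f + n * A g \<noteq> B f + n * B g"
proof -
  obtain g where g: "g \<in> \<Phi>" "B f \<noteq> 0 \<or> B g \<noteq> 0" "A f - B f \<noteq> 0 \<or> A g - B g \<noteq> 0"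
    using assms by (cases "B f = 0") auto
  obtain n :: nat where "A f + n * A g \<noteq> 0" "B f + n * B g \<noteq> 0"
      "(A f - B f) + n * (A g - B g) \<noteq> 0"
    using ex_nat_avoiding_affine_roots[of "{(A f, A g), (B f, B g), (A f - B f, A g - B g)}"]
      g assms(2) by auto
  then show ?thesis using g(1) by (auto simp: algebra_simps)
qed

lemma measure_determining_distinguishes:
  assumes "measure_determining \<Phi>" "borel_prob M" "borel_prob N" "M \<noteq> N"
  obtains \<phi> where "\<phi> \<in> \<Phi>" "integral\<^sup>L M \<phi> - integral\<^sup>L N \<phi> \<noteq> 0"
  using assms unfolding measure_determining_def by (metis eq_iff_diff_eq_0)

theorem lemma3p5:
  fixes \<Phi> :: "(real \<Rightarrow> real) set" and \<alpha> \<mu> \<nu> :: "real measure"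
  assumes "countable \<Phi>"
    and "measure_determining \<Phi>"
    and "\<forall>\<phi>\<in>\<Phi>. \<phi> \<in> borel_measurable borel \<and> (\<forall>x. \<bar>\<phi> x\<bar> \<le> 1)"
    and "borel_prob \<alpha>" and "borel_prob \<mu>" and "borel_prob \<nu>"
    and "\<mu> \<noteq> \<alpha>" and "\<nu> \<noteq> \<alpha>" and "\<mu> \<noteq> \<nu>"
  shows "\<exists>\<psi>\<in>Phi1 \<Phi>.
     (\<integral>x. (\<psi> x - integral\<^sup>L \<alpha> \<psi>) \<partial>\<mu>) \<noteq> 0 \<and>
     (\<integral>x. (\<psi> x - integral\<^sup>L \<alpha> \<psi>) \<partial>\<nu>) \<noteq> 0 \<and>
     (\<integral>x. (\<psi> x - integral\<^sup>L \<alpha> \<psi>) \<partial>\<mu>) \<noteq> (\<integral>x. (\<psi> x - integral\<^sup>L \<alpha> \<psi>) \<partial>\<nu>)"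
proof -
  define A where "A h = integral\<^sup>L \<mu> h - integral\<^sup>L \<alpha> h" for h :: "real \<Rightarrow> real"
  define B where "B h = integral\<^sup>L \<nu> h - integral\<^sup>L \<alpha> h" for h :: "real \<Rightarrow> real"
  obtain f where f: "f \<in> \<Phi>" "A f \<noteq> 0"
    using measure_determining_distinguishes[OF assms(2,5,4,7)] unfolding A_def .
  obtain f2 where f2: "f2 \<in> \<Phi>" "B f2 \<noteq> 0"
    using measure_determining_distinguishes[OF assms(2,6,4,8)] unfolding B_def .
  obtain f3 where f3: "f3 \<in> \<Phi>" "A f3 \<noteq> B f3"
    using measure_determining_distinguishes[OF assms(2,5,6,9)] unfolding A_def B_def by auto
  obtain g and n :: nat where g: "g \<in> \<Phi>"
    and n: "A f + n * A g \<noteq> 0" "B f + n * B g \<noteq> 0" "A f + n * A g \<noteq> B f + n * B g"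
    using ex_combination_separating_functionals[of f \<Phi> A f2 B f3, OF f f2 f3] by blast
  define h where "h = (\<lambda>y. f y + real n * g y)"
  have meas: "f \<in> borel_measurable borel" "\<And>x. \<bar>f x\<bar> \<le> 1"
      "g \<in> borel_measurable borel" "\<And>x. \<bar>g x\<bar> \<le> 1"
    using assms(3) f g by auto
  have "A h = A f + n * A g" "B h = B f + n * B g"
    unfolding A_def B_def h_def
    by (rule borel_prob_integral_diff_lincomb[OF assms(5,4) meas]
        borel_prob_integral_diff_lincomb[OF assms(6,4) meas])+
  with n have Ah: "A h \<noteq> 0" and Bh: "B h \<noteq> 0" and ABh: "A h \<noteq> B h" by simp_all
  then have h_nonzero: "h \<noteq> (\<lambda>y. 0)" by (auto simp: A_def)
  then have s: "supnorm h > 0" unfolding h_def by (rule supnorm_lincomb_pos[OF meas(2,4)])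
  have "(\<integral>x. (h x / supnorm h - integral\<^sup>L \<alpha> (\<lambda>x. h x / supnorm h)) \<partial>M) =
      (integral\<^sup>L M h - integral\<^sup>L \<alpha> h) / supnorm h" if "borel_prob M" for M
    using borel_prob_centered_integral_divide[OF that] borel_prob_integrable_bounded[OF that meas(1,2)]
      borel_prob_integrable_bounded[OF that meas(3,4)] unfolding h_def by simp
  moreover have "(\<lambda>x. h x / supnorm h) \<in> Phi1 \<Phi>"
    unfolding Phi1_def h_def using f g h_nonzero[unfolded h_def] Rats_of_nat by blast
  ultimately show ?thesis
    using assms(5,6) Ah Bh ABh s unfolding A_def B_def
    by (intro bexI[of _ "\<lambda>x. h x / supnorm h"]) auto
qed

end
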